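(* Let $m$ be an element of the monoid $M$. Then there exists a representative $w_0\in\Sigma^*$ of $m$ in which every pair of consecutive letters is of one of the forms: $c_ic_j$ with $i\ge j-1$; $c_it_{j\,j+1}$ with $i\ge j-1$; $t_{i\,i+1}c_j$ with $i\ge j-2$; or $t_{i\,i+1}t_{j\,j+1}$ with $i\ge j-2$. Furthermore: (i) this representative $w_0$ is unique, and it is the lexicographically maximal representative of $m$ with respect to the total order $c_1<t_{12}<c_2<t_{23}<c_3<\cdots$ on $\Sigma$; (ii) if $w_0$ starts with $c_1$ or $t_{12}$, then every representative $w\in\Sigma^*$ of $m$ starts with $c_1$ or $t_{12}$; (iii) if $w_0$ contains no factor of the form $c_ic_i$ ($i\ge1$), then no representative $w\in\Sigma^*$ of $m$ contains a factor of this form.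
   Context: Let $\Sigma=\{c_1,c_2,\dots\}\cup\{t_{12},t_{23},\dots,t_{i\,i+1},\dots\}$ be a countable alphabet, $\Sigma^*$ the free monoid on $\Sigma$, and $M$ the free partially commutative monoid obtained from $\Sigma^*$ by imposing the commutation relations $c_ic_j=c_jc_i$ if $|i-j|\ge2$; $c_it_{j\,j+1}=t_{j\,j+1}c_i$ if $i\le j-2$ or $i\ge j+3$; $t_{i\,i+1}t_{j\,j+1}=t_{j\,j+1}t_{i\,i+1}$ if $|i-j|\ge3$. A representative of $m\in M$ is a word in $\Sigma^*$ whose image in $M$ is $m$ (all representatives have the same length). A factor of a word is a block of consecutive letters. *)

theory Defs
  imports Main
begin

text \<open>Letters: C i stands for c_i, T i stands for t_{i,i+1}; indices must be \<ge> 1.\<close>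
datatype letter = C nat | T nat

fun idx :: "letter \<Rightarrow> nat" where
  "idx (C i) = i" | "idx (T i) = i"

definition valid_word :: "letter list \<Rightarrow> bool" where
  "valid_word w \<longleftrightarrow> (\<forall>x\<in>set w. idx x \<ge> 1)"

fun commute :: "letter \<Rightarrow> letter \<Rightarrow> bool" where
  "commute (C i) (C j) = (i + 2 \<le> j \<or> j + 2 \<le> i)"
| "commute (C i) (T j) = (i + 2 \<le> j \<or> j + 3 \<le> i)"
| "commute (T j) (C i) = (i + 2 \<le> j \<or> j + 3 \<le> i)"
| "commute (T i) (T j) = (i + 3 \<le> j \<or> j + 3 \<le> i)"

definition swap_step :: "(letter list \<times> letter list) set" where
  "swap_step = {(u @ [a, b] @ v, u @ [b, a] @ v) | u a b v. commute a b}"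

definition trace_eq :: "letter list \<Rightarrow> letter list \<Rightarrow> bool" where
  "trace_eq u w \<longleftrightarrow> (u, w) \<in> swap_step\<^sup>*"

text \<open>The monoid M: equivalence classes of words over \<Sigma>; an element m \<in> M is the
  set of its representatives.\<close>
definition Mon :: "letter list set set" where
  "Mon = {{w. trace_eq u w} | u. valid_word u}"

fun good_pair :: "letter \<Rightarrow> letter \<Rightarrow> bool" where
  "good_pair (C i) (C j) = (j \<le> i + 1)"
| "good_pair (C i) (T j) = (j \<le> i + 1)"
| "good_pair (T i) (C j) = (j \<le> i + 2)"
| "good_pair (T i) (T j) = (j \<le> i + 2)"

definition normal_form :: "letter list \<Rightarrow> bool" where
  "normal_form w \<longleftrightarrow> (\<forall>k. Suc k < length w \<longrightarrow> good_pair (w ! k) (w ! Suc k))"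

fun rank :: "letter \<Rightarrow> nat" where
  "rank (C i) = 2 * i" | "rank (T i) = 2 * i + 1"

definition letter_less :: "(letter \<times> letter) set" where
  "letter_less = {(a, b). rank a < rank b}"

definition lex_less :: "letter list \<Rightarrow> letter list \<Rightarrow> bool" where
  "lex_less u w \<longleftrightarrow> (u, w) \<in> lexord letter_less"

definition starts_c1_t12 :: "letter list \<Rightarrow> bool" where
  "starts_c1_t12 w \<longleftrightarrow> (\<exists>v. w = C 1 # v \<or> w = T 1 # v)"

definition has_square_c :: "letter list \<Rightarrow> bool" where
  "has_square_c w \<longleftrightarrow> (\<exists>u v i. i \<ge> 1 \<and> w = u @ [C i, C i] @ v)"

end

theory Submission
  imports Defs
begin

text \<open>
  A pair of adjacent letters is allowed exactly when the two letters do not commute or the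
  first one is larger, so swapping a forbidden pair is a commutation that makes the word
  lexicographically larger; a lexicographically maximal representative, which exists because
  a class is finite, is therefore in normal form.  Conversely, if a word is congruent to
  \<open>b y\<close>, then \<open>b\<close> occurs in it after a prefix of letters commuting with \<open>b\<close>.  For a normal
  word this forces \<open>b\<close> to be at most its first letter: along a normal word the letters of
  such a prefix would have to decrease, and a letter commuting with two letters on either
  side of it in the order forces those two to commute.  By induction a normal word is the
  lexicographic maximum of its class, which gives uniqueness and (ii), \<open>c\<^sub>1\<close> and
  \<open>t\<^sub>1\<^sub>2\<close> being the two smallest letters.  For (iii), two occurrences of \<open>c\<^sub>i\<close> separated
  only by letters commuting with \<open>c\<^sub>i\<close> survive every commutation, and in a normal word the
  same decrease argument makes them adjacent.
\<close>

lemma commute_sym: "commute a b \<longleftrightarrow> commute b a"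
  by (cases a; cases b) auto

lemma commute_irrefl: "\<not> commute a a"
  by (cases a) auto

lemma rank_eq_iff: "rank a = rank b \<longleftrightarrow> a = b"
  by (cases a; cases b) (auto, presburger+)

lemma good_pair_iff: "good_pair a b \<longleftrightarrow> \<not> (commute a b \<and> rank a < rank b)"
  by (cases a; cases b) auto

text \<open>For a general commutation relation the adjacent-pair condition does not single out the
  lexicographically maximal representative; this property of the order is what makes it do so.\<close>

lemma commute_outer:
  "commute a b \<Longrightarrow> commute b c \<Longrightarrow> rank a < rank b \<Longrightarrow> rank b < rank c \<Longrightarrow> commute a c"
  by (cases a; cases b; cases c) auto

lemma swap_step_sym: "(x, y) \<in> swap_step \<Longrightarrow> (y, x) \<in> swap_step"
  unfolding swap_step_def using commute_sym by blast

lemma swap_step_context: "(x, y) \<in> swap_step \<Longrightarrow> (p @ x @ q, p @ y @ q) \<in> swap_step"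
proof -
  assume "(x, y) \<in> swap_step"
  then obtain u a b v where "x = u @ [a, b] @ v" "y = u @ [b, a] @ v" "commute a b"
    unfolding swap_step_def by blast
  then show ?thesis
    unfolding swap_step_def
    by (intro CollectI exI[of _ "p @ u"] exI[of _ a] exI[of _ b] exI[of _ "v @ q"]) simp
qed

lemma trace_eq_refl [simp]: "trace_eq w w"
  unfolding trace_eq_def by simp

lemma trace_eq_trans: "trace_eq u v \<Longrightarrow> trace_eq v w \<Longrightarrow> trace_eq u w"
  unfolding trace_eq_def by simp

lemma trace_eq_sym: "trace_eq u w \<Longrightarrow> trace_eq w u"
  unfolding trace_eq_def
  by (induction rule: rtrancl_induct) (auto intro: converse_rtrancl_into_rtrancl swap_step_sym)

lemma swap_step_imp_trace_eq: "(u, w) \<in> swap_step \<Longrightarrow> trace_eq u w"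
  unfolding trace_eq_def by simp

lemma swap_step_length_set: "(u, w) \<in> swap_step \<Longrightarrow> length w = length u \<and> set w = set u"
  unfolding swap_step_def by auto

lemma trace_eq_length_set: "trace_eq u w \<Longrightarrow> length w = length u \<and> set w = set u"
  unfolding trace_eq_def
  by (induction rule: rtrancl_induct) (auto dest: swap_step_length_set)

lemma trace_eq_valid_word: "trace_eq u w \<Longrightarrow> valid_word u \<Longrightarrow> valid_word w"
  unfolding valid_word_def using trace_eq_length_set by blast

lemma finite_trace_class: "finite {w. trace_eq u w}"
proof (rule finite_subset)
  show "{w. trace_eq u w} \<subseteq> {w. set w \<subseteq> set u \<and> length w = length u}"
    using trace_eq_length_set by auto
qed (rule finite_lists_length_eq, simp)

lemma swap_step_split:
  assumes "(u @ b # v, w') \<in> swap_step"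
  shows "(\<exists>u'. (u, u') \<in> swap_step \<and> w' = u' @ b # v)
       \<or> (\<exists>v'. (v, v') \<in> swap_step \<and> w' = u @ b # v')
       \<or> (\<exists>a v'. v = a # v' \<and> commute b a \<and> w' = u @ a # b # v')
       \<or> (\<exists>a u'. u = u' @ [a] \<and> commute a b \<and> w' = u' @ b # a # v)"
proof -
  obtain p x z s where eq: "u @ b # v = p @ x # z # s" and w': "w' = p @ z # x # s"
    and xz: "commute x z"
    using assms unfolding swap_step_def by auto
  have pair: "([x, z], [z, x]) \<in> swap_step"
    using xz unfolding swap_step_def by force
  from eq obtain us
    where "u = p @ us \<and> us @ b # v = x # z # s \<or> u @ us = p \<and> b # v = us @ x # z # s"
    unfolding append_eq_append_conv2 by blast
  then consider
      (left) s' where "u = p @ x # z # s'" "s = s' @ b # v"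
    | (right) p' where "p = u @ b # p'" "v = p' @ x # z # s"
    | (moved_right) "p = u" "x = b" "v = z # s"
    | (moved_left) "u = p @ [x]" "z = b" "s = v"
    by (cases us; cases "tl us"; auto simp: Cons_eq_append_conv)
  then show ?thesis
  proof cases
    case left
    then show ?thesis using swap_step_context[OF pair, of p s'] w' by auto
  next
    case right
    then show ?thesis using swap_step_context[OF pair, of p' s] w' by auto
  qed (use w' xz in auto)
qed

lemma swap_step_commuting_prefix:
  assumes "\<forall>c\<in>set x. commute c b" and "(x @ b # y, w') \<in> swap_step"
  shows "\<exists>x' y'. w' = x' @ b # y' \<and> (\<forall>c\<in>set x'. commute c b) \<and> trace_eq (x @ y) (x' @ y')"
  using swap_step_split[OF assms(2)]
proof (elim disjE exE conjE)
  fix x' assume step: "(x, x') \<in> swap_step" and w': "w' = x' @ b # y"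
  have "set x' = set x"
    using swap_step_length_set[OF step] by simp
  moreover have "trace_eq (x @ y) (x' @ y)"
    using swap_step_imp_trace_eq swap_step_context[OF step, of "[]" y] by simp
  ultimately show ?thesis
    using assms(1) w' by (intro exI[of _ x'] exI[of _ y]) auto
next
  fix y' assume step: "(y, y') \<in> swap_step" and w': "w' = x @ b # y'"
  have "trace_eq (x @ y) (x @ y')"
    using swap_step_imp_trace_eq swap_step_context[OF step, of x "[]"] by simp
  then show ?thesis
    using assms(1) w' by (intro exI[of _ x] exI[of _ y']) auto
next
  fix a y' assume "y = a # y'" "commute b a" "w' = x @ a # b # y'"
  then show ?thesis
    using assms(1) commute_sym by (intro exI[of _ "x @ [a]"] exI[of _ y']) auto
next
  fix a x' assume "x = x' @ [a]" "commute a b" "w' = x' @ b # a # y"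
  then show ?thesis
    using assms(1) by (intro exI[of _ x'] exI[of _ "a # y"]) auto
qed

lemma trace_eq_Cons_split:
  assumes "trace_eq (b # r) w"
  shows "\<exists>u v. w = u @ b # v \<and> (\<forall>c\<in>set u. commute c b) \<and> trace_eq r (u @ v)"
  using assms unfolding trace_eq_def
proof (induction rule: rtrancl_induct)
  case base
  show ?case by (intro exI[of _ "[]"] exI[of _ r]) simp
next
  case (step w w')
  then obtain u v where "w = u @ b # v" "\<forall>c\<in>set u. commute c b" "trace_eq r (u @ v)"
    unfolding trace_eq_def by blast
  with swap_step_commuting_prefix[of u b v w'] step(2) show ?case
    using trace_eq_trans unfolding trace_eq_def by meson
qed

lemma successively_iff_nth:
  "successively P xs \<longleftrightarrow> (\<forall>k. Suc k < length xs \<longrightarrow> P (xs ! k) (xs ! Suc k))"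
  by (induction P xs rule: successively.induct) (auto simp: nth_Cons split: nat.split)

lemma not_successively_split:
  "\<not> successively P xs \<Longrightarrow> \<exists>p a b s. xs = p @ [a, b] @ s \<and> \<not> P a b"
proof (induction P xs rule: successively.induct)
  case (3 P x y xs)
  then show ?case by (metis append_Cons append_Nil successively.simps(3))
qed simp_all

lemma normal_form_iff_successively: "normal_form w \<longleftrightarrow> successively good_pair w"
  unfolding normal_form_def successively_iff_nth ..

lemma normal_form_appendD: "normal_form (u @ v) \<Longrightarrow> normal_form v"
  unfolding normal_form_iff_successively successively_append_iff by blast

lemma commute_rank_neq: "commute a b \<Longrightarrow> rank a \<noteq> rank b"
  using commute_irrefl rank_eq_iff by metis

lemma normal_form_commuting_prefix:
  "normal_form (a # u @ b # v) \<Longrightarrow> \<forall>c\<in>set (a # u). commute c b \<Longrightarrow> rank b < rank a"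
proof (induction u arbitrary: a)
  case Nil
  then have "good_pair a b" "commute a b"
    by (simp_all add: normal_form_iff_successively)
  then show ?case
    using commute_rank_neq unfolding good_pair_iff by fastforce
next
  case (Cons c u)
  have ac: "good_pair a c" and nc: "normal_form (c # u @ b # v)"
    using Cons.prems(1) by (simp_all add: normal_form_iff_successively)
  have bc: "rank b < rank c"
    using Cons.IH[OF nc] Cons.prems(2) by simp
  have ab: "commute a b" and cb: "commute c b"
    using Cons.prems(2) by auto
  show ?case
  proof (rule ccontr)
    assume "\<not> rank b < rank a"
    with commute_rank_neq[OF ab] have "rank a < rank b" by simp
    with ab cb bc have "commute a c" "rank a < rank c"
      using commute_outer commute_sym by (blast, simp)
    with ac show False unfolding good_pair_iff by blast
  qed
qed

lemma lex_less_irrefl: "\<not> lex_less w w"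
  unfolding lex_less_def letter_less_def by (simp add: lexord_irreflexive)

lemma lex_less_trans: "lex_less u v \<Longrightarrow> lex_less v w \<Longrightarrow> lex_less u w"
  unfolding lex_less_def letter_less_def by (rule lexord_trans) (auto simp: trans_def)

lemma normal_form_lex_greatest:
  "normal_form w \<Longrightarrow> trace_eq w w' \<Longrightarrow> w' = w \<or> lex_less w' w"
proof (induction w arbitrary: w')
  case Nil
  then show ?case using trace_eq_length_set by fastforce
next
  case (Cons a x)
  obtain b y where w': "w' = b # y"
    using trace_eq_length_set[OF Cons.prems(2)] by (cases w') auto
  obtain u v where ax: "a # x = u @ b # v" and ub: "\<forall>c\<in>set u. commute c b"
    and yuv: "trace_eq y (u @ v)"
    using trace_eq_Cons_split[OF trace_eq_sym[OF Cons.prems(2)[unfolded w']]] by blast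
  show ?case
  proof (cases u)
    case Nil
    then have "a = b" "trace_eq x y" using ax yuv trace_eq_sym by auto
    moreover have "normal_form x"
      using Cons.prems(1) normal_form_appendD[of "[a]"] by simp
    ultimately show ?thesis
      using Cons.IH w' unfolding lex_less_def by auto
  next
    case (Cons a' u')
    then have "rank b < rank a"
      using normal_form_commuting_prefix[of a u' b v] \<open>normal_form (a # x)\<close> ax ub by auto
    then show ?thesis unfolding w' lex_less_def letter_less_def by simp
  qed
qed

lemma normal_form_unique:
  "normal_form w \<Longrightarrow> normal_form w' \<Longrightarrow> trace_eq w w' \<Longrightarrow> w' = w"
  using normal_form_lex_greatest trace_eq_sym lex_less_trans lex_less_irrefl by metis

lemma normal_form_if_lex_maximal:
  assumes "\<forall>w'. trace_eq w w' \<longrightarrow> \<not> lex_less w w'"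
  shows "normal_form w"
proof (rule ccontr)
  assume "\<not> normal_form w"
  then obtain p a b s where w: "w = p @ [a, b] @ s" and "\<not> good_pair a b"
    unfolding normal_form_iff_successively using not_successively_split by blast
  then have "commute a b" "rank a < rank b" unfolding good_pair_iff by auto
  then have "(w, p @ [b, a] @ s) \<in> swap_step" "lex_less w (p @ [b, a] @ s)"
    unfolding w swap_step_def lex_less_def letter_less_def
    by (blast, intro lexord_append_leftI, simp)
  with assms show False using swap_step_imp_trace_eq by blast
qed

lemma finite_has_lex_maximal:
  assumes "finite S" "x \<in> S"
  shows "\<exists>z\<in>S. \<forall>y\<in>S. \<not> lex_less z y"
proof -
  define R where "R = {(z, y). z \<in> S \<and> y \<in> S \<and> lex_less z y}"
  have "finite R"
    using assms(1) by (intro finite_subset[of R "S \<times> S"]) (auto simp: R_def)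
  moreover have "trans R" "irrefl R"
    unfolding R_def trans_def irrefl_def using lex_less_trans lex_less_irrefl by blast+
  then have "acyclic R"
    by (simp add: acyclic_irrefl trancl_id)
  ultimately have "wf (R\<inverse>)"
    by (rule finite_acyclic_wf_converse)
  then obtain z where "z \<in> S" "\<And>y. (y, z) \<in> R\<inverse> \<Longrightarrow> y \<notin> S"
    using wfE_min assms(2) by metis
  then show ?thesis unfolding R_def by blast
qed

lemma normal_form_exists: "\<exists>w. trace_eq u w \<and> normal_form w"
proof -
  obtain w where uw: "trace_eq u w" and max: "\<forall>y\<in>{w. trace_eq u w}. \<not> lex_less w y"
    using finite_has_lex_maximal[OF finite_trace_class, of u u] by auto
  have "normal_form w"
    using max uw trace_eq_trans by (intro normal_form_if_lex_maximal) blast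
  with uw show ?thesis by blast
qed

lemma starts_c1_t12_trace_eq:
  assumes "normal_form w0" "trace_eq w0 w" "valid_word w" "starts_c1_t12 w0"
  shows "starts_c1_t12 w"
proof -
  obtain a x where w0: "w0 = a # x" and a: "a = C 1 \<or> a = T 1"
    using assms(4) unfolding starts_c1_t12_def by blast
  obtain b y where w: "w = b # y"
    using trace_eq_length_set[OF assms(2)] w0 by (cases w) auto
  have "rank b \<le> rank a"
    using normal_form_lex_greatest[OF assms(1,2)]
    unfolding w w0 lex_less_def letter_less_def by auto
  moreover have "idx b \<ge> 1"
    using assms(3) unfolding w valid_word_def by simp
  ultimately have "b = C 1 \<or> b = T 1"
    using a by (cases b) auto
  then show ?thesis unfolding w starts_c1_t12_def by blast
qed

definition latent_square_c :: "letter list \<Rightarrow> bool" where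
  "latent_square_c w \<longleftrightarrow>
     (\<exists>u x v i. w = u @ C i # x @ C i # v \<and> (\<forall>c\<in>set x. commute c (C i)))"

lemma swap_step_latent_square_c:
  assumes "latent_square_c w" "(w, w') \<in> swap_step"
  shows "latent_square_c w'"
proof -
  obtain u x v i where w: "w = u @ C i # (x @ C i # v)" and x: "\<forall>c\<in>set x. commute c (C i)"
    using assms(1) unfolding latent_square_c_def by auto
  from swap_step_split[OF assms(2)[unfolded w]] show ?thesis
  proof (elim disjE exE conjE)
    fix u' assume "w' = u' @ C i # x @ C i # v"
    then show ?thesis using x unfolding latent_square_c_def by blast
  next
    fix r' assume "(x @ C i # v, r') \<in> swap_step" "w' = u @ C i # r'"
    then show ?thesis
      using swap_step_commuting_prefix[OF x] unfolding latent_square_c_def by blast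
  next
    fix a r' assume r: "x @ C i # v = a # r'" "commute (C i) a" "w' = u @ a # C i # r'"
    then obtain x' where "x = a # x'" "r' = x' @ C i # v"
      using commute_irrefl by (cases x) auto
    then show ?thesis
      using r x unfolding latent_square_c_def
      by (intro exI[of _ "u @ [a]"] exI[of _ x'] exI[of _ v] exI[of _ i]) auto
  next
    fix a u' assume "commute a (C i)" "w' = u' @ C i # a # x @ C i # v"
    then show ?thesis
      using x unfolding latent_square_c_def
      by (intro exI[of _ u'] exI[of _ "a # x"] exI[of _ v] exI[of _ i]) auto
  qed
qed

lemma trace_eq_latent_square_c: "trace_eq w w' \<Longrightarrow> latent_square_c w \<Longrightarrow> latent_square_c w'"
  unfolding trace_eq_def
  by (induction rule: rtrancl_induct) (auto intro: swap_step_latent_square_c)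

lemma latent_square_c_if_has_square_c: "has_square_c w \<Longrightarrow> latent_square_c w"
  unfolding has_square_c_def latent_square_c_def by force

lemma has_square_c_if_normal_form_latent:
  assumes "normal_form w" "valid_word w" "latent_square_c w"
  shows "has_square_c w"
proof -
  obtain u x v i where w: "w = u @ C i # x @ C i # v" and x: "\<forall>c\<in>set x. commute c (C i)"
    using assms(3) unfolding latent_square_c_def by auto
  have "i \<ge> 1"
    using assms(2) unfolding w valid_word_def by auto
  show ?thesis
  proof (cases x)
    case Nil
    with w \<open>i \<ge> 1\<close> show ?thesis unfolding has_square_c_def by auto
  next
    case (Cons a x')
    have nf: "normal_form (C i # a # x' @ C i # v)"
      using normal_form_appendD[of u] assms(1) w Cons by simp
    then have "good_pair (C i) a"
      by (simp add: normal_form_iff_successively)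
    moreover have "commute (C i) a" "rank (C i) < rank a"
      using x Cons commute_sym normal_form_commuting_prefix[of a x' "C i" v]
        normal_form_appendD[of "[C i]"] nf by auto
    ultimately show ?thesis unfolding good_pair_iff by blast
  qed
qed

lemma has_square_c_trace_eq:
  assumes "normal_form w0" "valid_word w0" "trace_eq w0 w" "has_square_c w"
  shows "has_square_c w0"
  using assms trace_eq_sym trace_eq_latent_square_c latent_square_c_if_has_square_c
    has_square_c_if_normal_form_latent by blast

theorem theorem3p12:
  assumes "m \<in> Mon"
  shows "\<exists>w0 \<in> m. normal_form w0
           \<and> (\<forall>w \<in> m. normal_form w \<longrightarrow> w = w0)
           \<and> (\<forall>w \<in> m. w = w0 \<or> lex_less w w0)
           \<and> (starts_c1_t12 w0 \<longrightarrow> (\<forall>w \<in> m. starts_c1_t12 w))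
           \<and> (\<not> has_square_c w0 \<longrightarrow> (\<forall>w \<in> m. \<not> has_square_c w))"
proof -
  obtain u where m: "m = {w. trace_eq u w}" and "valid_word u"
    using assms unfolding Mon_def by blast
  obtain w0 where uw0: "trace_eq u w0" and nf: "normal_form w0"
    using normal_form_exists by blast
  have m0: "m = {w. trace_eq w0 w}"
    unfolding m using uw0 trace_eq_sym trace_eq_trans by blast
  have valid: "valid_word w0" "\<And>w. trace_eq w0 w \<Longrightarrow> valid_word w"
    using uw0 \<open>valid_word u\<close> trace_eq_valid_word by blast+
  have "w0 \<in> m"
    unfolding m0 by simp
  moreover have "\<forall>w \<in> m. normal_form w \<longrightarrow> w = w0"
    unfolding m0 using normal_form_unique nf by blast
  moreover have "\<forall>w \<in> m. w = w0 \<or> lex_less w w0"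
    unfolding m0 using normal_form_lex_greatest nf by blast
  moreover have "starts_c1_t12 w0 \<longrightarrow> (\<forall>w \<in> m. starts_c1_t12 w)"
    unfolding m0 using starts_c1_t12_trace_eq nf valid by blast
  moreover have "\<not> has_square_c w0 \<longrightarrow> (\<forall>w \<in> m. \<not> has_square_c w)"
    unfolding m0 using has_square_c_trace_eq nf valid by blast
  ultimately show ?thesis
    using nf by blast
qed

end
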